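(* For all integers $n\ge1$, $k\ge0$ and every sequence $\boldsymbol a$ of positive reals, \[ \theta_{n;k}(t)=\frac1{k!}B_k\big(x_1,\dots,x_k\big),\qquad x_\ell=(\ell-1)!\,A_n(\ell)\big(t^\ell-(t-1)^\ell\big), \] equivalently \[ \theta_{n;k}(t)=\sum_{\substack{m_1,m_2,\ldots\ge0\\ m_1+2m_2+3m_3+\cdots=k}}\ \prod_{i\ge1}\frac{1}{m_i!}\Big(\frac{A_n(i)\,(t^i-(t-1)^i)}{i}\Big)^{m_i}. \]
   Context: Let $\boldsymbol a=(a_j)_{j\ge1}$ be a sequence of positive reals. For integers $n\ge1$, $k\ge0$ let $\mathcal M_{n,k}=\{(\ell_1,\dots,\ell_k)\in\mathbb N^k: n\ge\ell_1\ge\cdots\ge\ell_k\ge1\}$. For $\vec\ell\in\mathcal M_{n,k}$ let $\sigma(\vec\ell)=|\{1\le j\le k-1:\ell_j=\ell_{j+1}\}|$ and $w(\vec\ell)=\prod_{j=1}^k a_{\ell_j}$. Define $\theta_{n;k}(t)=\sum_{\vec\ell\in\mathcal M_{n,k}}w(\vec\ell)\,t^{\sigma(\vec\ell)}$, with $\theta_{n;0}(t)=1$, and $A_n(j)=\sum_{m=1}^n a_m^j$. The complete Bell polynomials $B_j$ are defined by $\exp\big(\sum_{\ell\ge1}x_\ell z^\ell/\ell!\big)=\sum_{j\ge0}B_j(x_1,\dots,x_j)z^j/j!$. *)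

theory Defs
  imports Complex_Main "HOL-Computational_Algebra.Formal_Power_Series"
begin

text \<open>The index set M_{n,k}: weakly decreasing tuples (l_1,...,l_k) with n >= l_1 and l_k >= 1,
  represented as functions nat => nat supported on {1..k} (value 0 outside).\<close>
definition Mset :: "nat \<Rightarrow> nat \<Rightarrow> (nat \<Rightarrow> nat) set" where
  "Mset n k = {l. (\<forall>j\<in>{1..k}. 1 \<le> l j \<and> l j \<le> n)
                 \<and> (\<forall>j\<in>{1..<k}. l (j+1) \<le> l j)
                 \<and> (\<forall>j. j \<notin> {1..k} \<longrightarrow> l j = 0)}"

definition sigma_ties :: "nat \<Rightarrow> (nat \<Rightarrow> nat) \<Rightarrow> nat" where
  "sigma_ties k l = card {j \<in> {1..<k}. l j = l (j+1)}"

definition weight :: "(nat \<Rightarrow> real) \<Rightarrow> nat \<Rightarrow> (nat \<Rightarrow> nat) \<Rightarrow> real" where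
  "weight a k l = (\<Prod>j=1..k. a (l j))"

definition theta :: "(nat \<Rightarrow> real) \<Rightarrow> nat \<Rightarrow> nat \<Rightarrow> real \<Rightarrow> real" where
  "theta a n k t = (\<Sum>l\<in>Mset n k. weight a k l * t ^ sigma_ties k l)"

definition Apow :: "(nat \<Rightarrow> real) \<Rightarrow> nat \<Rightarrow> nat \<Rightarrow> real" where
  "Apow a n j = (\<Sum>m=1..n. a m ^ j)"

text \<open>Complete Bell polynomials via the generating function
  exp(\<Sum>_{l\<ge>1} x_l z^l / l!) = \<Sum>_j B_j(x_1,...,x_j) z^j / j!  (formal power series).\<close>
definition bell_gen :: "(nat \<Rightarrow> real) \<Rightarrow> real fps" where
  "bell_gen x = fps_exp 1 oo Abs_fps (\<lambda>l. if l = 0 then 0 else x l / fact l)"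

definition complete_bell :: "nat \<Rightarrow> (nat \<Rightarrow> real) \<Rightarrow> real" where
  "complete_bell j x = fact j * fps_nth (bell_gen x) j"

end

theory Submission
  imports Defs
begin

text \<open>Write \<open>Theta_n(z) = \<Sum>_k theta_{n;k}(t) z^k\<close>. Splitting the tuples according to whether
  \<open>l_1 = n\<close> gives \<open>Theta_n(z) (1 - a_n t z) = Theta_{n-1}(z) (1 - a_n (t - 1) z)\<close>, so \<open>Theta_n\<close>
  is the product of the factors \<open>(1 - a_m (t - 1) z) / (1 - a_m t z)\<close>, and its logarithmic
  derivative is \<open>L(z) = \<Sum>_j A_n(j+1) (t^(j+1) - (t-1)^(j+1)) z^j\<close>. The Bell generating function
  \<open>exp(\<Sum>_l x_l z^l / l!)\<close> has the same logarithmic derivative and constant term 1, and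
  solutions of \<open>F' = F L\<close> are determined by their constant term. Expanding the coefficients of
  \<open>exp(\<Sum>_i y_i z^i)\<close> the same way yields the sum over partitions.\<close>

unbundle fps_syntax

section \<open>Coefficients of the exponential of a power series\<close>

lemma fps_deriv_eq_mult_unique:
  fixes F G L :: "'a::field_char_0 fps"
  assumes "fps_deriv F = F * L" and "fps_deriv G = G * L" and "F $ 0 = G $ 0"
  shows "F = G"
proof (rule fps_ext)
  fix k show "F $ k = G $ k"
  proof (induction k rule: less_induct)
    case (less k)
    show ?case
    proof (cases k)
      case 0 then show ?thesis using assms(3) by simp
    next
      case (Suc j)
      have "of_nat (Suc j) * F $ Suc j = (\<Sum>i=0..j. F $ i * L $ (j - i))"
        using arg_cong[OF assms(1), of "\<lambda>H. H $ j"] by (simp add: fps_mult_nth)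
      also have "\<dots> = (\<Sum>i=0..j. G $ i * L $ (j - i))"
        using less Suc by (intro sum.cong) auto
      also have "\<dots> = of_nat (Suc j) * G $ Suc j"
        using arg_cong[OF assms(2), of "\<lambda>H. H $ j"] by (simp add: fps_mult_nth)
      finally show ?thesis using Suc by (simp del: of_nat_Suc)
    qed
  qed
qed

lemma fps_deriv_bell_gen:
  "fps_deriv (bell_gen x) = bell_gen x * Abs_fps (\<lambda>j. x (Suc j) / fact j)"
proof -
  define G where "G = Abs_fps (\<lambda>l. if l = 0 then 0 else x l / fact l)"
  have "fps_deriv G = Abs_fps (\<lambda>j. x (Suc j) / fact j)"
    by (rule fps_ext) (simp add: G_def field_simps del: of_nat_Suc)
  moreover have "G $ 0 = 0" by (simp add: G_def)
  ultimately show ?thesis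
    unfolding bell_gen_def G_def[symmetric] by (simp add: fps_compose_deriv)
qed

text \<open>\<open>m i\<close> is the multiplicity of the part \<open>i\<close>. The bound \<open>K\<close> on the parts is kept apart
  from \<open>k\<close> because removing a part \<open>i\<close> from a partition of \<open>k\<close> leaves a partition of
  \<open>k - i\<close> whose parts are still only bounded by \<open>K\<close>.\<close>

definition partition_mults :: "nat \<Rightarrow> nat \<Rightarrow> (nat \<Rightarrow> nat) set" where
  "partition_mults K k = {m. (\<forall>i. i \<notin> {1..K} \<longrightarrow> m i = 0) \<and> (\<Sum>i=1..K. i * m i) = k}"

definition partition_term :: "(nat \<Rightarrow> 'a::field_char_0) \<Rightarrow> nat \<Rightarrow> (nat \<Rightarrow> nat) \<Rightarrow> 'a" where
  "partition_term y K m = (\<Prod>i=1..K. (1 / fact (m i)) * y i ^ m i)"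

definition partition_poly :: "(nat \<Rightarrow> 'a::field_char_0) \<Rightarrow> nat \<Rightarrow> nat \<Rightarrow> 'a" where
  "partition_poly y K k = (\<Sum>m\<in>partition_mults K k. partition_term y K m)"

lemma partition_mults_part_le: "m \<in> partition_mults K k \<Longrightarrow> i \<in> {1..K} \<Longrightarrow> i * m i \<le> k"
  unfolding partition_mults_def using member_le_sum[of i "{1..K}" "\<lambda>i. i * m i"] by auto

lemma partition_mults_eq_0:
  assumes "m \<in> partition_mults K k" and "k < i"
  shows "m i = 0"
proof (cases "i \<in> {1..K}")
  case True
  with assms show ?thesis using partition_mults_part_le[OF assms(1) True] by (cases "m i") auto
qed (use assms in \<open>auto simp: partition_mults_def\<close>)

lemma finite_partition_mults: "finite (partition_mults K k)"
proof -
  have "partition_mults K k \<subseteq> {m. \<forall>i. (i \<in> {1..K} \<longrightarrow> m i \<in> {0..k}) \<and> (i \<notin> {1..K} \<longrightarrow> m i = 0)}"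
  proof safe
    fix m i assume m: "m \<in> partition_mults K k" and i: "i \<in> {1..K}"
    have "m i \<le> i * m i" using i mult_le_mono1[of 1 i "m i"] by simp
    also have "\<dots> \<le> k" using partition_mults_part_le[OF m i] .
    finally show "m i \<in> {0..k}" by simp
  qed (auto simp: partition_mults_def)
  then show ?thesis by (rule finite_subset) (rule finite_set_of_finite_funs; simp)
qed

lemma sum_weighted_fun_upd:
  fixes m :: "nat \<Rightarrow> nat"
  assumes "finite A" "i \<in> A"
  shows "(\<Sum>j\<in>A. j * (m(i := v)) j) + i * m i = (\<Sum>j\<in>A. j * m j) + i * v"
proof -
  have "(\<Sum>j\<in>A - {i}. j * (m(i := v)) j) = (\<Sum>j\<in>A - {i}. j * m j)"
    by (intro sum.cong) auto
  then show ?thesis using assms by (simp add: sum.remove)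
qed

lemma partition_term_incr:
  fixes y :: "nat \<Rightarrow> 'a::field_char_0"
  assumes "i \<in> {1..K}"
  shows "of_nat (m i + 1) * partition_term y K (m(i := m i + 1)) = y i * partition_term y K m"
proof -
  let ?g = "\<lambda>m i. (1 / fact (m i)) * y i ^ m i"
  have rest: "(\<Prod>j\<in>{1..K} - {i}. ?g (m(i := m i + 1)) j) = (\<Prod>j\<in>{1..K} - {i}. ?g m j)"
    by (intro prod.cong) auto
  have "(of_nat (m i + 1) :: 'a) \<noteq> 0" by (simp only: of_nat_eq_0_iff)
  then have step: "of_nat (m i + 1) * ?g (m(i := m i + 1)) i = y i * ?g m i"
    by (simp add: field_simps del: of_nat_Suc)
  have "of_nat (m i + 1) * partition_term y K (m(i := m i + 1))
      = (of_nat (m i + 1) * ?g (m(i := m i + 1)) i) * (\<Prod>j\<in>{1..K} - {i}. ?g m j)"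
    using assms by (simp add: partition_term_def prod.remove rest mult.assoc)
  also have "\<dots> = y i * (?g m i * (\<Prod>j\<in>{1..K} - {i}. ?g m j))"
    by (simp only: step mult.assoc)
  also have "\<dots> = y i * partition_term y K m"
    using assms by (simp add: partition_term_def prod.remove)
  finally show ?thesis .
qed

lemma partition_mults_incr:
  assumes i: "i \<in> {1..K}" and "i \<le> k"
  shows "{m \<in> partition_mults K k. 0 < m i} = (\<lambda>m. m(i := m i + 1)) ` partition_mults K (k - i)"
    and "inj_on (\<lambda>m. m(i := m i + 1)) (partition_mults K (k - i))"
proof -
  let ?incr = "\<lambda>m. m(i := m i + 1)"
  have weight_incr: "(\<Sum>j=1..K. j * ?incr m j) = (\<Sum>j=1..K. j * m j) + i" for m
    using sum_weighted_fun_upd[of "{1..K}" i m "m i + 1"] i by simp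
  show "{m \<in> partition_mults K k. 0 < m i} = ?incr ` partition_mults K (k - i)"
  proof safe
    fix m assume m: "m \<in> partition_mults K k" "0 < m i"
    let ?decr = "m(i := m i - 1)"
    have decr: "?incr ?decr = m" using m(2) by (auto simp: fun_eq_iff)
    have "(\<Sum>j=1..K. j * ?decr j) + i = (\<Sum>j=1..K. j * m j)"
      using weight_incr[of ?decr] unfolding decr by simp
    then have "?decr \<in> partition_mults K (k - i)" using m(1) by (auto simp: partition_mults_def)
    then show "m \<in> ?incr ` partition_mults K (k - i)" by (rule image_eqI[where f = ?incr, OF decr[symmetric]])
  next
    fix m assume "m \<in> partition_mults K (k - i)"
    then show "?incr m \<in> partition_mults K k"
      using weight_incr[of m] assms by (auto simp: partition_mults_def)
  qed simp
  show "inj_on ?incr (partition_mults K (k - i))"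
  proof (rule inj_onI)
    fix m m' :: "nat \<Rightarrow> nat" assume "?incr m = ?incr m'"
    then show "m = m'" by (metis fun_upd_eqD fun_upd_triv fun_upd_upd add_right_cancel)
  qed
qed

lemma sum_partition_mults_part:
  fixes y :: "nat \<Rightarrow> 'a::field_char_0"
  assumes i: "i \<in> {1..K}"
  shows "(\<Sum>m\<in>partition_mults K k. of_nat (i * m i) * partition_term y K m)
       = (if i \<le> k then of_nat i * y i * partition_poly y K (k - i) else 0)"
proof (cases "i \<le> k")
  case False
  then have "\<forall>m\<in>partition_mults K k. m i = 0"
    using partition_mults_eq_0 by (simp add: not_le)
  then show ?thesis using False by (auto intro!: sum.neutral)
next
  case True
  let ?incr = "\<lambda>m. m(i := m i + 1)"
  have "(\<Sum>m\<in>partition_mults K k. of_nat (i * m i) * partition_term y K m)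
      = (\<Sum>m\<in>{m \<in> partition_mults K k. 0 < m i}. of_nat (i * m i) * partition_term y K m)"
    by (rule sum.mono_neutral_right) (auto simp: finite_partition_mults)
  also have "\<dots> = (\<Sum>m\<in>partition_mults K (k - i). of_nat (i * (m i + 1)) * partition_term y K (?incr m))"
    unfolding partition_mults_incr[OF i True]
    by (simp only: sum.reindex[OF partition_mults_incr(2)[OF i True]] comp_def fun_upd_same)
  also have "\<dots> = (\<Sum>m\<in>partition_mults K (k - i). of_nat i * y i * partition_term y K m)"
  proof (rule sum.cong[OF refl])
    fix m :: "nat \<Rightarrow> nat"
    have "of_nat (i * (m i + 1)) * partition_term y K (?incr m)
        = of_nat i * (of_nat (m i + 1) * partition_term y K (?incr m))"
      unfolding of_nat_mult by (rule mult.assoc)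
    also have "\<dots> = of_nat i * (y i * partition_term y K m)"
      unfolding partition_term_incr[OF i] ..
    finally show "of_nat (i * (m i + 1)) * partition_term y K (?incr m) = of_nat i * y i * partition_term y K m"
      by (simp only: mult.assoc)
  qed
  also have "\<dots> = of_nat i * y i * partition_poly y K (k - i)"
    by (simp add: partition_poly_def sum_distrib_left)
  finally show ?thesis using True by simp
qed

lemma partition_poly_recurrence:
  fixes y :: "nat \<Rightarrow> 'a::field_char_0"
  shows "of_nat k * partition_poly y K k
       = (\<Sum>i=1..K. if i \<le> k then of_nat i * y i * partition_poly y K (k - i) else 0)"
proof -
  have "of_nat k * partition_poly y K k
      = (\<Sum>m\<in>partition_mults K k. (\<Sum>i=1..K. of_nat (i * m i)) * partition_term y K m)"
    unfolding partition_poly_def sum_distrib_left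
  proof (intro sum.cong refl)
    fix m assume "m \<in> partition_mults K k"
    then have "k = (\<Sum>i=1..K. i * m i)" by (simp add: partition_mults_def)
    then show "of_nat k * partition_term y K m = (\<Sum>i=1..K. of_nat (i * m i)) * partition_term y K m"
      by (simp only: of_nat_sum)
  qed
  also have "\<dots> = (\<Sum>i=1..K. \<Sum>m\<in>partition_mults K k. of_nat (i * m i) * partition_term y K m)"
    by (simp add: sum_distrib_right sum.swap[of _ "partition_mults K k"])
  also have "\<dots> = (\<Sum>i=1..K. if i \<le> k then of_nat i * y i * partition_poly y K (k - i) else 0)"
    by (intro sum.cong refl sum_partition_mults_part)
  finally show ?thesis .
qed

lemma partition_poly_bound_indep:
  assumes "k \<le> K"
  shows "partition_poly y K k = partition_poly y k k"
proof -
  have weights: "(\<Sum>i=1..K. i * m i) = (\<Sum>i=1..k. i * m i)"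
    if "\<forall>i>k. m i = 0" for m :: "nat \<Rightarrow> nat"
    by (rule sum.mono_neutral_right) (use assms that in auto)
  have terms: "partition_term y K m = partition_term y k m"
    if "\<forall>i>k. m i = 0" for m :: "nat \<Rightarrow> nat"
    unfolding partition_term_def by (rule prod.mono_neutral_right) (use assms that in auto)
  have "partition_mults K k = partition_mults k k"
  proof safe
    fix m assume m: "m \<in> partition_mults K k"
    then have "\<forall>i>k. m i = 0" using partition_mults_eq_0 by blast
    then show "m \<in> partition_mults k k" using m weights by (auto simp: partition_mults_def)
  next
    fix m assume m: "m \<in> partition_mults k k"
    then have "\<forall>i>k. m i = 0" using partition_mults_eq_0 by blast
    then show "m \<in> partition_mults K k" using m weights assms by (auto simp: partition_mults_def)
  qed
  then show ?thesis
    unfolding partition_poly_def using partition_mults_eq_0 terms by (intro sum.cong) auto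
qed

lemma partition_poly_0: "partition_poly y K 0 = 1"
proof -
  have zero: "m i = 0" if m: "m \<in> partition_mults K 0" for m i
  proof (cases "i = 0")
    case True then show ?thesis using m by (simp add: partition_mults_def)
  qed (use partition_mults_eq_0[OF m] in simp)
  have "partition_mults K 0 = {\<lambda>_. 0}"
  proof
    show "partition_mults K 0 \<subseteq> {\<lambda>_. 0}" using zero by (auto simp: fun_eq_iff)
    show "{\<lambda>_. 0} \<subseteq> partition_mults K 0" by (simp add: partition_mults_def)
  qed
  then show ?thesis by (simp add: partition_poly_def partition_term_def)
qed

lemma fps_deriv_partition_poly:
  fixes y :: "nat \<Rightarrow> 'a::field_char_0"
  defines "P \<equiv> Abs_fps (\<lambda>k. partition_poly y k k)"
  shows "fps_deriv P = P * Abs_fps (\<lambda>j. of_nat (Suc j) * y (Suc j))"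
proof (rule fps_ext)
  fix k
  have "of_nat (Suc k) * partition_poly y (Suc k) (Suc k)
      = (\<Sum>i=1..Suc k. of_nat i * y i * partition_poly y (Suc k) (Suc k - i))"
    by (simp only: partition_poly_recurrence) (intro sum.cong refl if_P, simp)
  also have "\<dots> = (\<Sum>i=1..Suc k. of_nat i * y i * partition_poly y (Suc k - i) (Suc k - i))"
    by (intro sum.cong refl arg_cong[where f = "(*) _"] partition_poly_bound_indep) simp
  also have "\<dots> = (\<Sum>j=0..k. of_nat (Suc j) * y (Suc j) * partition_poly y (k - j) (k - j))"
    unfolding One_nat_def sum.shift_bounds_cl_Suc_ivl by simp
  also have "\<dots> = (\<Sum>j=0..k. partition_poly y j j * (of_nat (Suc (k - j)) * y (Suc (k - j))))"
    by (subst sum.atLeastAtMost_rev) (rule sum.cong[OF refl], simp add: mult.commute)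
  finally show "fps_deriv P $ k = (P * Abs_fps (\<lambda>j. of_nat (Suc j) * y (Suc j))) $ k"
    by (simp add: P_def fps_mult_nth)
qed

lemma bell_gen_nth: "bell_gen x $ k = partition_poly (\<lambda>i. x i / fact i) k k"
proof -
  define P where "P = Abs_fps (\<lambda>k. partition_poly (\<lambda>i. x i / fact i) k k)"
  have "Abs_fps (\<lambda>j. of_nat (Suc j) * (x (Suc j) / fact (Suc j))) = Abs_fps (\<lambda>j. x (Suc j) / fact j)"
    by (rule fps_ext) (simp del: of_nat_Suc fact_Suc add: fact_Suc field_simps)
  then have "fps_deriv P = P * Abs_fps (\<lambda>j. x (Suc j) / fact j)"
    using fps_deriv_partition_poly[of "\<lambda>i. x i / fact i"] by (simp only: P_def)
  moreover have "bell_gen x $ 0 = P $ 0"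
    by (simp add: bell_gen_def P_def partition_poly_0)
  ultimately have "bell_gen x = P"
    using fps_deriv_bell_gen fps_deriv_eq_mult_unique by metis
  then show ?thesis by (simp add: P_def)
qed

section \<open>Splitting the tuples by their first entry\<close>

lemma finite_Mset: "finite (Mset n k)"
proof -
  have "Mset n k \<subseteq> {l. \<forall>j. (j \<in> {1..k} \<longrightarrow> l j \<in> {0..n}) \<and> (j \<notin> {1..k} \<longrightarrow> l j = 0)}"
    by (auto simp: Mset_def)
  then show ?thesis by (rule finite_subset) (rule finite_set_of_finite_funs; simp)
qed

lemma Mset_le_first:
  assumes "l \<in> Mset n k" "1 \<le> j" "j \<le> k"
  shows "l j \<le> l 1"
  using assms(2,3)
proof (induction j rule: dec_induct)
  case (step j)
  then have "l (j + 1) \<le> l j" using assms(1) by (auto simp: Mset_def)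
  with step show ?case by simp
qed simp

lemma Mset_0: "Mset n 0 = {\<lambda>_. 0}"
  by (auto simp: Mset_def fun_eq_iff)

lemma theta_0: "theta a n 0 t = 1"
  by (simp add: theta_def Mset_0 weight_def sigma_ties_def)

lemma theta_empty: "theta a 0 (Suc k) t = 0"
proof -
  have "Mset 0 (Suc k) = {}" by (force simp: Mset_def)
  then show ?thesis by (simp add: theta_def)
qed

lemma Mset_first_neq:
  assumes "1 \<le> n"
  shows "{l \<in> Mset n k. l 1 \<noteq> n} = Mset (n - 1) k"
proof (cases "k = 0")
  case True
  then show ?thesis using assms by (auto simp: Mset_0)
next
  case False
  have "l \<in> Mset (n - 1) k" if l: "l \<in> Mset n k" "l 1 \<noteq> n" for l
  proof -
    have "1 \<in> {1..k}" using False by simp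
    then have "l 1 \<le> n" using l(1) by (simp add: Mset_def)
    with l(2) have "l 1 \<le> n - 1" by simp
    then have "\<forall>j\<in>{1..k}. l j \<le> n - 1" using Mset_le_first[OF l(1)] by fastforce
    then show ?thesis using l by (auto simp: Mset_def)
  qed
  moreover have "l \<in> Mset n k \<and> l 1 \<noteq> n" if l: "l \<in> Mset (n - 1) k" for l
  proof -
    have "1 \<in> {1..k}" using False by simp
    then have "l 1 \<le> n - 1" using l by (simp add: Mset_def)
    then show ?thesis using l assms by (auto simp: Mset_def)
  qed
  ultimately show ?thesis by blast
qed

definition theta_top :: "(nat \<Rightarrow> real) \<Rightarrow> nat \<Rightarrow> nat \<Rightarrow> real \<Rightarrow> real" where
  "theta_top a n k t = (\<Sum>l\<in>{l \<in> Mset n k. l 1 = n}. weight a k l * t ^ sigma_ties k l)"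

lemma theta_split_first:
  assumes "1 \<le> n"
  shows "theta a n k t = theta a (n - 1) k t + theta_top a n k t"
proof -
  have "Mset n k \<inter> {l. l 1 = n} = {l \<in> Mset n k. l 1 = n}"
    and "Mset n k - {l. l 1 = n} = {l \<in> Mset n k. l 1 \<noteq> n}" by blast+
  then show ?thesis
    unfolding theta_def theta_top_def Mset_first_neq[OF assms, symmetric]
    using sum.Int_Diff[OF finite_Mset, of _ n k "{l. l 1 = n}"] by (simp add: ac_simps)
qed

definition tuple_cons :: "nat \<Rightarrow> (nat \<Rightarrow> nat) \<Rightarrow> nat \<Rightarrow> nat" where
  "tuple_cons n l = (\<lambda>j. if j = 0 then 0 else if j = 1 then n else l (j - 1))"

definition tuple_tail :: "(nat \<Rightarrow> nat) \<Rightarrow> nat \<Rightarrow> nat" where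
  "tuple_tail l = (\<lambda>j. if j = 0 then 0 else l (Suc j))"

lemma tuple_cons_in_Mset:
  assumes l: "l \<in> Mset n k" and n: "1 \<le> n"
  shows "tuple_cons n l \<in> Mset n (Suc k)"
proof -
  have "1 \<le> tuple_cons n l j \<and> tuple_cons n l j \<le> n" if "j \<in> {1..Suc k}" for j
  proof (cases "j = 1")
    case False
    then have "j - 1 \<in> {1..k}" using that by auto
    then show ?thesis using False that l by (auto simp: tuple_cons_def Mset_def)
  qed (use n in \<open>simp add: tuple_cons_def\<close>)
  moreover have "tuple_cons n l (j + 1) \<le> tuple_cons n l j" if "j \<in> {1..<Suc k}" for j
  proof (cases "j = 1")
    case True
    then show ?thesis using that l by (auto simp: tuple_cons_def Mset_def)
  next
    case False
    then have "j - 1 \<in> {1..<k}" using that by auto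
    then have "l (Suc (j - 1)) \<le> l (j - 1)" using l by (simp add: Mset_def)
    then show ?thesis using False that by (simp add: tuple_cons_def)
  qed
  moreover have "tuple_cons n l j = 0" if "j \<notin> {1..Suc k}" for j
  proof -
    have "j \<noteq> 1 \<and> (j = 0 \<or> j - 1 \<notin> {1..k})" using that by auto
    then show ?thesis using l by (auto simp: tuple_cons_def Mset_def)
  qed
  ultimately show ?thesis by (simp add: Mset_def)
qed

lemma tuple_tail_in_Mset:
  assumes "l \<in> Mset n (Suc k)"
  shows "tuple_tail l \<in> Mset n k"
  using assms by (auto simp: tuple_tail_def Mset_def)

lemma tuple_tail_cons: "l \<in> Mset n k \<Longrightarrow> tuple_tail (tuple_cons n l) = l"
  by (auto simp: tuple_tail_def tuple_cons_def fun_eq_iff Mset_def)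

lemma tuple_cons_tail: "l \<in> Mset n (Suc k) \<Longrightarrow> l 1 = n \<Longrightarrow> tuple_cons n (tuple_tail l) = l"
  by (auto simp: tuple_tail_def tuple_cons_def fun_eq_iff Mset_def)

lemma Mset_first_eq:
  assumes "1 \<le> n"
  shows "{l \<in> Mset n (Suc k). l 1 = n} = tuple_cons n ` Mset n k"
proof (rule subset_antisym; rule subsetI)
  fix l assume "l \<in> {l \<in> Mset n (Suc k). l 1 = n}"
  then have "tuple_cons n (tuple_tail l) = l" "tuple_tail l \<in> Mset n k"
    using tuple_cons_tail tuple_tail_in_Mset by auto
  then show "l \<in> tuple_cons n ` Mset n k" by (metis image_eqI)
next
  fix l assume "l \<in> tuple_cons n ` Mset n k"
  then show "l \<in> {l \<in> Mset n (Suc k). l 1 = n}"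
    using tuple_cons_in_Mset assms by (auto simp: tuple_cons_def)
qed

lemma weight_tuple_cons:
  "weight a (Suc k) (tuple_cons n l) = a n * weight a k l"
proof -
  have "weight a (Suc k) (tuple_cons n l) = a (tuple_cons n l 1) * (\<Prod>j=Suc 1..Suc k. a (tuple_cons n l j))"
    unfolding weight_def by (rule prod.atLeast_Suc_atMost) simp
  also have "(\<Prod>j=Suc 1..Suc k. a (tuple_cons n l j)) = weight a k l"
    unfolding prod.shift_bounds_cl_Suc_ivl weight_def by (intro prod.cong refl) (auto simp: tuple_cons_def)
  finally show ?thesis by (simp add: tuple_cons_def)
qed

lemma card_filter_Suc_shift:
  "card {j \<in> {1..<Suc k}. P j} = (if 1 \<le> k \<and> P 1 then 1 else 0) + card {j \<in> {1..<k}. P (Suc j)}"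
proof (induction k)
  case (Suc k)
  have split: "{j \<in> {1..<Suc (Suc k)}. P j} = {j \<in> {1..<Suc k}. P j} \<union> (if P (Suc k) then {Suc k} else {})"
    by (auto simp: less_Suc_eq)
  have last: "card {j \<in> {1..<Suc (Suc k)}. P j} = card {j \<in> {1..<Suc k}. P j} + (if P (Suc k) then 1 else 0)"
    unfolding split by (subst card_Un_disjoint) auto
  have split_shifted: "{j \<in> {1..<Suc k}. P (Suc j)} = {j \<in> {1..<k}. P (Suc j)} \<union> (if 1 \<le> k \<and> P (Suc k) then {k} else {})"
    by (auto simp: less_Suc_eq)
  have last_shifted: "card {j \<in> {1..<Suc k}. P (Suc j)}
      = card {j \<in> {1..<k}. P (Suc j)} + (if 1 \<le> k \<and> P (Suc k) then 1 else 0)"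
    unfolding split_shifted by (subst card_Un_disjoint) auto
  show ?case unfolding last last_shifted Suc.IH by (cases k) auto
qed simp

lemma sigma_ties_tuple_cons:
  assumes l: "l \<in> Mset n k" and n: "1 \<le> n"
  shows "sigma_ties (Suc k) (tuple_cons n l) = sigma_ties k l + (if l 1 = n then 1 else 0)"
proof -
  have "sigma_ties (Suc k) (tuple_cons n l)
      = (if 1 \<le> k \<and> tuple_cons n l 1 = tuple_cons n l (1 + 1) then 1 else 0)
        + card {j \<in> {1..<k}. tuple_cons n l (Suc j) = tuple_cons n l (Suc j + 1)}"
    unfolding sigma_ties_def by (rule card_filter_Suc_shift)
  moreover have "(1 \<le> k \<and> tuple_cons n l 1 = tuple_cons n l (1 + 1)) \<longleftrightarrow> l 1 = n"
  proof (cases "k = 0")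
    case True
    then have "l 1 = 0" using l by (simp add: Mset_0)
    then show ?thesis using True n by simp
  qed (auto simp: tuple_cons_def)
  moreover have "{j \<in> {1..<k}. tuple_cons n l (Suc j) = tuple_cons n l (Suc j + 1)}
      = {j \<in> {1..<k}. l j = l (j + 1)}"
    by (auto simp: tuple_cons_def)
  ultimately show ?thesis by (simp add: sigma_ties_def)
qed

lemma theta_top_0:
  assumes "1 \<le> n"
  shows "theta_top a n 0 t = 0"
proof -
  have "{l \<in> Mset n 0. l 1 = n} = {}" using assms by (simp add: Mset_0)
  then show ?thesis unfolding theta_top_def by (simp only: sum.empty)
qed

lemma theta_top_Suc:
  assumes n: "1 \<le> n"
  shows "theta_top a n (Suc k) t = a n * (theta a (n - 1) k t + t * theta_top a n k t)"
proof -
  let ?f = "\<lambda>k l. weight a k l * t ^ sigma_ties k l"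
  have inj: "inj_on (tuple_cons n) (Mset n k)" by (metis inj_onI tuple_tail_cons)
  have "theta_top a n (Suc k) t = (\<Sum>l\<in>Mset n k. ?f (Suc k) (tuple_cons n l))"
    unfolding theta_top_def Mset_first_eq[OF n] by (rule sum.reindex[OF inj, unfolded comp_def])
  also have "\<dots> = (\<Sum>l\<in>Mset n k. a n * (if l 1 = n then t * ?f k l else ?f k l))"
  proof (rule sum.cong[OF refl])
    fix l assume l: "l \<in> Mset n k"
    show "?f (Suc k) (tuple_cons n l) = a n * (if l 1 = n then t * ?f k l else ?f k l)"
      unfolding weight_tuple_cons sigma_ties_tuple_cons[OF l n] by (simp add: power_add)
  qed
  also have "\<dots> = a n * ((\<Sum>l\<in>{l \<in> Mset n k. l 1 = n}. t * ?f k l) + (\<Sum>l\<in>{l \<in> Mset n k. l 1 \<noteq> n}. ?f k l))"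
  proof -
    have "Mset n k \<inter> {l. l 1 = n} = {l \<in> Mset n k. l 1 = n}"
      and "Mset n k \<inter> - {l. l 1 = n} = {l \<in> Mset n k. l 1 \<noteq> n}" by blast+
    then show ?thesis
      unfolding sum_distrib_left[symmetric] sum.If_cases[OF finite_Mset] by simp
  qed
  also have "\<dots> = a n * (theta a (n - 1) k t + t * theta_top a n k t)"
    unfolding Mset_first_neq[OF n] by (simp add: theta_def theta_top_def sum_distrib_left)
  finally show ?thesis .
qed

section \<open>The generating function of \<open>theta\<close>\<close>

lemma fps_linear_factors_mult:
  fixes b c :: "'a::comm_ring_1"
  shows "Abs_fps (\<lambda>j. c ^ (j+1) - b ^ (j+1)) * ((1 - fps_const c * fps_X) * (1 - fps_const b * fps_X))
       = fps_const (c - b)"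
proof -
  let ?l = "Abs_fps (\<lambda>j. c ^ (j+1) - b ^ (j+1))"
  have "?l * ((1 - fps_const c * fps_X) * (1 - fps_const b * fps_X))
      = ?l - fps_const (b + c) * (fps_X * ?l) + fps_const (b * c) * (fps_X ^ 2 * ?l)"
    by (simp add: algebra_simps power2_eq_square flip: fps_const_add fps_const_mult)
  also have "\<dots> = fps_const (c - b)"
  proof (rule fps_ext)
    fix j
    show "(?l - fps_const (b + c) * (fps_X * ?l) + fps_const (b * c) * (fps_X ^ 2 * ?l)) $ j
        = fps_const (c - b) $ j"
      by (cases j; cases "j - 1") (simp_all add: fps_X_power_mult_nth algebra_simps power2_eq_square)
  qed
  finally show ?thesis .
qed

text \<open>The added series is \<open>(c - b) / ((1 - c X) (1 - b X))\<close>, the logarithmic derivative of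
  \<open>(1 - b X) / (1 - c X)\<close>; the proof multiplies through by the denominator instead of dividing.\<close>

lemma fps_deriv_linear_quotient:
  fixes P Q L :: "'a::idom fps" and b c :: 'a
  assumes quot: "Q * (1 - fps_const c * fps_X) = P * (1 - fps_const b * fps_X)"
    and P: "fps_deriv P = P * L"
  shows "fps_deriv Q = Q * (L + Abs_fps (\<lambda>j. c ^ (j+1) - b ^ (j+1)))"
proof -
  let ?C = "1 - fps_const c * fps_X" and ?B = "1 - fps_const b * fps_X"
  let ?l = "Abs_fps (\<lambda>j. c ^ (j+1) - b ^ (j+1))"
  have dquot: "fps_deriv Q * ?C - Q * fps_const c = fps_deriv P * ?B - P * fps_const b"
    using arg_cong[OF quot, of fps_deriv] by (simp add: algebra_simps)
  have ring_identity: "(1 - c' * X) * (1 - b' * X) * dQ - (1 - c' * X) * (1 - b' * X) * (Q * (L + l))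
     = (1 - b' * X) * ((dQ * (1 - c' * X) - Q * c') - (dP * (1 - b' * X) - P * b'))
       + (1 - b' * X) * (1 - b' * X) * (dP - P * L)
       + ((1 - b' * X) * L - b') * (P * (1 - b' * X) - Q * (1 - c' * X))
       - Q * (l * ((1 - c' * X) * (1 - b' * X)) - (c' - b'))"
    for c' b' X dQ dP :: "'a fps" and l
    by (simp add: algebra_simps)
  have "?C * ?B * fps_deriv Q - ?C * ?B * (Q * (L + ?l))
     = ?B * ((fps_deriv Q * ?C - Q * fps_const c) - (fps_deriv P * ?B - P * fps_const b))
       + ?B * ?B * (fps_deriv P - P * L)
       + (?B * L - fps_const b) * (P * ?B - Q * ?C)
       - Q * (?l * (?C * ?B) - fps_const (c - b))"
    unfolding fps_const_sub[symmetric] by (rule ring_identity)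
  also have "\<dots> = 0"
    unfolding dquot quot P fps_linear_factors_mult by simp
  finally have "?C * ?B * fps_deriv Q = ?C * ?B * (Q * (L + ?l))" by simp
  moreover have "(?C * ?B) $ 0 = 1" by simp
  then have "?C * ?B \<noteq> 0" by (metis fps_zero_nth zero_neq_one)
  ultimately show ?thesis by simp
qed

definition theta_fps :: "(nat \<Rightarrow> real) \<Rightarrow> real \<Rightarrow> nat \<Rightarrow> real fps" where
  "theta_fps a t n = Abs_fps (\<lambda>k. theta a n k t)"

definition power_sum_fps :: "(nat \<Rightarrow> real) \<Rightarrow> real \<Rightarrow> nat \<Rightarrow> real fps" where
  "power_sum_fps a t n = Abs_fps (\<lambda>j. Apow a n (j + 1) * (t ^ (j + 1) - (t - 1) ^ (j + 1)))"

lemma theta_fps_0: "theta_fps a t 0 = 1"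
proof (rule fps_ext)
  fix k show "theta_fps a t 0 $ k = 1 $ k"
    by (cases k) (simp_all add: theta_fps_def theta_0 theta_empty)
qed

lemma theta_fps_linear_factor:
  assumes n: "1 \<le> n"
  shows "theta_fps a t n * (1 - fps_const (a n * t) * fps_X)
       = theta_fps a t (n - 1) * (1 - fps_const (a n * (t - 1)) * fps_X)"
proof -
  let ?P = "theta_fps a t (n - 1)" and ?U = "Abs_fps (\<lambda>k. theta_top a n k t)"
  let ?A = "fps_const (a n)" and ?T = "fps_const t"
  have split: "theta_fps a t n = ?P + ?U"
    by (rule fps_ext) (simp add: theta_fps_def theta_split_first[OF n])
  have top: "?U = fps_X * (?A * (?P + ?T * ?U))"
  proof (rule fps_ext)
    fix k show "?U $ k = (fps_X * (?A * (?P + ?T * ?U))) $ k"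
      by (cases k) (simp_all add: theta_fps_def theta_top_0[OF n] theta_top_Suc[OF n])
  qed
  have ring_identity: "(P + U) * (1 - A * T * X) - P * (1 - (A * T - A) * X) = U - X * (A * (P + T * U))"
    for P U A T X :: "real fps"
    by (simp add: algebra_simps)
  have diff: "(?P + ?U) * (1 - ?A * ?T * fps_X) - ?P * (1 - (?A * ?T - ?A) * fps_X) = 0"
    using ring_identity[of ?P ?U ?A ?T fps_X] by (simp only: top[symmetric] diff_self)
  have const_products: "fps_const (a n * t) = ?A * ?T" "fps_const (a n * (t - 1)) = ?A * ?T - ?A"
    by (simp_all add: algebra_simps)
  show ?thesis unfolding split const_products using diff by (simp only: right_minus_eq)
qed

lemma fps_deriv_theta_fps: "fps_deriv (theta_fps a t n) = theta_fps a t n * power_sum_fps a t n"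
proof (induction n)
  case 0
  have "power_sum_fps a t 0 = 0" by (rule fps_ext) (simp add: power_sum_fps_def Apow_def)
  then show ?case by (simp add: theta_fps_0)
next
  case (Suc n)
  let ?c = "a (Suc n) * t" and ?b = "a (Suc n) * (t - 1)"
  have "fps_deriv (theta_fps a t (Suc n))
      = theta_fps a t (Suc n) * (power_sum_fps a t n + Abs_fps (\<lambda>j. ?c ^ (j + 1) - ?b ^ (j + 1)))"
    using theta_fps_linear_factor[of "Suc n" a t] Suc.IH by (intro fps_deriv_linear_quotient) simp_all
  also have "power_sum_fps a t n + Abs_fps (\<lambda>j. ?c ^ (j + 1) - ?b ^ (j + 1)) = power_sum_fps a t (Suc n)"
  proof (rule fps_ext)
    fix j
    have "?c ^ e - ?b ^ e = a (Suc n) ^ e * (t ^ e - (t - 1) ^ e)" for e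
      unfolding power_mult_distrib by (rule right_diff_distrib[symmetric])
    then show "(power_sum_fps a t n + Abs_fps (\<lambda>j. ?c ^ (j + 1) - ?b ^ (j + 1))) $ j = power_sum_fps a t (Suc n) $ j"
      unfolding power_sum_fps_def Apow_def fps_add_nth fps_nth_Abs_fps
      by (simp add: distrib_right del: power_Suc)
  qed
  finally show ?case .
qed

lemma theta_eq_bell_gen_nth:
  "theta a n k t = bell_gen (\<lambda>l. fact (l - 1) * Apow a n l * (t ^ l - (t - 1) ^ l)) $ k"
proof -
  define x where "x = (\<lambda>l. fact (l - 1) * Apow a n l * (t ^ l - (t - 1) ^ l))"
  have log_deriv: "Abs_fps (\<lambda>j. x (Suc j) / fact j) = power_sum_fps a t n"
    by (rule fps_ext) (simp add: x_def power_sum_fps_def)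
  have "theta_fps a t n = bell_gen x"
  proof (intro fps_deriv_eq_mult_unique[OF fps_deriv_theta_fps])
    show "fps_deriv (bell_gen x) = bell_gen x * power_sum_fps a t n"
      using fps_deriv_bell_gen[of x] unfolding log_deriv .
    show "theta_fps a t n $ 0 = bell_gen x $ 0" by (simp add: theta_fps_def theta_0 bell_gen_def)
  qed
  then show ?thesis
    unfolding theta_fps_def x_def by (metis fps_nth_Abs_fps)
qed

theorem mainTheorem3:
  fixes a :: "nat \<Rightarrow> real" and n k :: nat and t :: real
  assumes apos: "\<And>j. j \<ge> 1 \<Longrightarrow> a j > 0"
    and n1: "n \<ge> 1"
  shows "theta a n k t =
           complete_bell k (\<lambda>l. fact (l - 1) * Apow a n l * (t ^ l - (t - 1) ^ l)) / fact k
       \<and> theta a n k t =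
           (\<Sum>m\<in>{m :: nat \<Rightarrow> nat. (\<forall>i. i \<notin> {1..k} \<longrightarrow> m i = 0)
                                  \<and> (\<Sum>i=1..k. i * m i) = k}.
              \<Prod>i=1..k. (1 / fact (m i)) * (Apow a n i * (t ^ i - (t - 1) ^ i) / i) ^ m i)"
proof -
  define x where "x = (\<lambda>l. fact (l - 1) * Apow a n l * (t ^ l - (t - 1) ^ l))"
  have bell: "theta a n k t = bell_gen x $ k"
    unfolding x_def by (rule theta_eq_bell_gen_nth)
  have "(\<lambda>i. x i / fact i) = (\<lambda>i. Apow a n i * (t ^ i - (t - 1) ^ i) / i)"
  proof
    fix i show "x i / fact i = Apow a n i * (t ^ i - (t - 1) ^ i) / i"
      by (cases i) (simp_all add: x_def)
  qed
  then have "theta a n k t = partition_poly (\<lambda>i. Apow a n i * (t ^ i - (t - 1) ^ i) / i) k k"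
    unfolding bell bell_gen_nth by simp
  moreover have "theta a n k t = complete_bell k x / fact k"
    unfolding bell complete_bell_def by simp
  ultimately show ?thesis
    unfolding x_def partition_poly_def partition_mults_def partition_term_def by simp
qed

end
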